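(* For all ordered graphs $G_1$ and $G_2$, $$r_o(G_1,G_2)\;\ge\;\frac14\min\Big\{\Delta^-(G_1)\big(\Delta^-(G_1)-1\big),\ \Delta^+(G_2)\big(\Delta^+(G_2)-1\big)\Big\}.$$
   Context: An ordered graph $G$ on $n$ vertices has vertex set $[n]=\{1,\dots,n\}$ with the natural linear order. An ordered graph $G$ on $[n]$ is contained in an ordered graph $H$ on a linearly ordered vertex set if there is an injective map $f$ from $[n]$ to $V(H)$ with $f(i)<f(j)$ whenever $i<j$ and $f(i)f(j)\in E(H)$ whenever $ij\in E(G)$; such an image is an ordered copy of $G$. For a vertex $v$ of an ordered graph, the left degree $d^-(v)$ is the number of neighbors $u$ of $v$ with $u<v$, and the right degree $d^+(v)$ is the number of neighbors $u$ with $u>v$; $\Delta^-(G)$ and $\Delta^+(G)$ denote the maxima of $d^-$ and $d^+$ over $V(G)$. The online ordered Ramsey game for $(G_1,G_2)$ is played by Builder and Painter on the vertex set $\mathbb N$ with its natural order. On each turn Builder selects a previously unselected pair of vertices (an edge) and Painter then colors it red or blue. Builder wins as soon as the colored edges contain an ordered red copy of $G_1$ or an ordered blue copy of $G_2$; Builder tries to minimize and Painter tries to maximize the number of turns. The online ordered Ramsey number $r_o(G_1,G_2)$ is the number of turns after which Builder wins when both players play optimally. *)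

theory Defs
  imports Main "HOL-Library.Extended_Real"
begin

definition ordered_graph :: "nat \<Rightarrow> (nat \<times> nat) set \<Rightarrow> bool" where
  "ordered_graph n E \<longleftrightarrow> (\<forall>(i,j)\<in>E. 1 \<le> i \<and> i < j \<and> j \<le> n)"

definition contains_ordered :: "nat \<Rightarrow> (nat \<times> nat) set \<Rightarrow> (nat \<times> nat) set \<Rightarrow> bool" where
  "contains_ordered n E H \<longleftrightarrow>
     (\<exists>f :: nat \<Rightarrow> nat. (\<forall>i j. 1 \<le> i \<longrightarrow> i < j \<longrightarrow> j \<le> n \<longrightarrow> f i < f j)
        \<and> (\<forall>(i,j)\<in>E. (f i, f j) \<in> H))"

definition left_deg :: "(nat \<times> nat) set \<Rightarrow> nat \<Rightarrow> nat" where
  "left_deg E v = card {u. (u,v) \<in> E}"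

definition right_deg :: "(nat \<times> nat) set \<Rightarrow> nat \<Rightarrow> nat" where
  "right_deg E v = card {u. (v,u) \<in> E}"

definition max_left_deg :: "nat \<Rightarrow> (nat \<times> nat) set \<Rightarrow> nat" where
  "max_left_deg n E = Max (insert 0 (left_deg E ` {1..n}))"

definition max_right_deg :: "nat \<Rightarrow> (nat \<times> nat) set \<Rightarrow> nat" where
  "max_right_deg n E = Max (insert 0 (right_deg E ` {1..n}))"

datatype colour = Red | Blue

text \<open>A game position: the colouring of the edges selected so far (None = not yet selected).
  Edges of the board on nat are pairs (u,v) with u < v.\<close>
type_synonym position = "nat \<times> nat \<Rightarrow> colour option"

definition builder_won :: "nat \<Rightarrow> (nat \<times> nat) set \<Rightarrow> nat \<Rightarrow> (nat \<times> nat) set \<Rightarrow> position \<Rightarrow> bool" where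
  "builder_won n1 E1 n2 E2 C \<longleftrightarrow>
     contains_ordered n1 E1 {e. C e = Some Red} \<or> contains_ordered n2 E2 {e. C e = Some Blue}"

primrec builder_wins_within ::
  "nat \<Rightarrow> (nat \<times> nat) set \<Rightarrow> nat \<Rightarrow> (nat \<times> nat) set \<Rightarrow> nat \<Rightarrow> position \<Rightarrow> bool" where
  "builder_wins_within n1 E1 n2 E2 0 C = builder_won n1 E1 n2 E2 C"
| "builder_wins_within n1 E1 n2 E2 (Suc k) C =
     (builder_won n1 E1 n2 E2 C \<or>
      (\<exists>u v. u < v \<and> C (u,v) = None \<and>
         (\<forall>c. builder_wins_within n1 E1 n2 E2 k (C((u,v) := Some c)))))"

definition online_ordered_ramsey ::
  "nat \<Rightarrow> (nat \<times> nat) set \<Rightarrow> nat \<Rightarrow> (nat \<times> nat) set \<Rightarrow> ereal" where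
  "online_ordered_ramsey n1 E1 n2 E2 =
     (if \<exists>k. builder_wins_within n1 E1 n2 E2 k (\<lambda>_. None)
      then ereal (real (LEAST k. builder_wins_within n1 E1 n2 E2 k (\<lambda>_. None)))
      else \<infinity>)"

end

theory Submission
  imports Defs
begin

text \<open>Painter colours a new edge (u,v) red as long as v has fewer than a - 1 red left
  neighbours, and blue otherwise, where a is the maximal left degree of the first graph. Red
  left degrees then stay below a, so there is never a red copy of the first graph; and the head
  w of every blue edge has at least a - 1 red left neighbours besides the blue one, i.e. at
  least a selected edges ending in w. A blue copy of the second graph contains a blue star
  with b right leaves, b its maximal right degree, so Builder must have selected at least
  a b \<ge> min(a(a-1), b(b-1))/4 edges.\<close>

lemma builder_wins_within_invariant:
  assumes preserve: "\<And>C u v. P C \<Longrightarrow> C (u,v) = None \<Longrightarrow> \<exists>c. P (C((u,v) := Some c))"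
    and "P C" and "finite {e. C e \<noteq> None}" and "builder_wins_within n1 E1 n2 E2 k C"
  shows "\<exists>C'. P C' \<and> builder_won n1 E1 n2 E2 C' \<and> finite {e. C' e \<noteq> None}
           \<and> card {e. C' e \<noteq> None} \<le> card {e. C e \<noteq> None} + k"
  using assms(2-)
proof (induction k arbitrary: C)
  case 0
  then show ?case by auto
next
  case (Suc k)
  show ?case
  proof (cases "builder_won n1 E1 n2 E2 C")
    case True
    with Suc.prems show ?thesis by auto
  next
    case False
    then obtain u v where free: "C (u,v) = None"
      and wins: "\<forall>c. builder_wins_within n1 E1 n2 E2 k (C((u,v) := Some c))"
      using Suc.prems(3) by auto
    obtain c where P': "P (C((u,v) := Some c))" using preserve[OF Suc.prems(1) free] by blast
    have coloured: "{e. (C((u,v) := Some c)) e \<noteq> None} = insert (u,v) {e. C e \<noteq> None}"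
      by auto
    from Suc.IH[OF P' _ wins[rule_format]] Suc.prems(2) free show ?thesis
      unfolding coloured by auto
  qed
qed

lemma online_ordered_ramsey_ge_invariant:
  assumes preserve: "\<And>C u v. P C \<Longrightarrow> C (u,v) = None \<Longrightarrow> \<exists>c. P (C((u,v) := Some c))"
    and "P (\<lambda>_. None)"
    and won: "\<And>C. P C \<Longrightarrow> finite {e. C e \<noteq> None} \<Longrightarrow> builder_won n1 E1 n2 E2 C
                \<Longrightarrow> N \<le> card {e. C e \<noteq> None}"
  shows "ereal (real N) \<le> online_ordered_ramsey n1 E1 n2 E2"
proof (cases "\<exists>k. builder_wins_within n1 E1 n2 E2 k (\<lambda>_. None)")
  case False
  then show ?thesis unfolding online_ordered_ramsey_def by simp
next
  case True
  define k where "k = (LEAST k. builder_wins_within n1 E1 n2 E2 k (\<lambda>_. None))"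
  have "builder_wins_within n1 E1 n2 E2 k (\<lambda>_. None)"
    unfolding k_def using True by (rule LeastI_ex)
  then obtain C where "P C" "builder_won n1 E1 n2 E2 C" "finite {e. C e \<noteq> None}"
      "card {e. C e \<noteq> None} \<le> k"
    using builder_wins_within_invariant[OF preserve assms(2)] by fastforce
  with won have "N \<le> k" by fastforce
  then show ?thesis
    unfolding online_ordered_ramsey_def k_def using True by simp
qed

lemma Max_insert_0_image_attained:
  fixes g :: "'a \<Rightarrow> nat"
  assumes "finite A" and "0 < Max (insert 0 (g ` A))"
  shows "\<exists>v\<in>A. g v = Max (insert 0 (g ` A))"
  using Max_in[of "insert 0 (g ` A)"] assms by auto

lemma contains_ordered_embedding:
  assumes "contains_ordered n E H"
  obtains f where "inj_on f {1..n}" and "\<And>i j. (i,j) \<in> E \<Longrightarrow> (f i, f j) \<in> H"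
proof -
  obtain f where mono: "\<forall>i j. 1 \<le> i \<longrightarrow> i < j \<longrightarrow> j \<le> n \<longrightarrow> f i < f j"
    and edges: "\<forall>(i,j)\<in>E. (f i, f j) \<in> H"
    using assms unfolding contains_ordered_def by blast
  have "strict_mono_on {1..n} f" by (rule strict_mono_onI) (use mono in auto)
  then show thesis using that strict_mono_on_imp_inj_on edges by blast
qed

lemma contains_ordered_left_star:
  assumes "contains_ordered n E H" and "ordered_graph n E"
  shows "\<exists>w U. card U = left_deg E v \<and> (\<forall>x\<in>U. (x,w) \<in> H)"
proof -
  obtain f where inj: "inj_on f {1..n}" and edges: "\<And>i j. (i,j) \<in> E \<Longrightarrow> (f i, f j) \<in> H"
    using contains_ordered_embedding[OF assms(1)] by blast
  have "{u. (u,v) \<in> E} \<subseteq> {1..n}"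
    using assms(2) unfolding ordered_graph_def by auto
  then have "card (f ` {u. (u,v) \<in> E}) = left_deg E v"
    unfolding left_deg_def using inj by (metis card_image inj_on_subset)
  then show ?thesis using edges by blast
qed

lemma contains_ordered_right_star:
  assumes "contains_ordered n E H" and "ordered_graph n E"
  shows "\<exists>u W. card W = right_deg E v \<and> (\<forall>w\<in>W. (u,w) \<in> H)"
proof -
  obtain f where inj: "inj_on f {1..n}" and edges: "\<And>i j. (i,j) \<in> E \<Longrightarrow> (f i, f j) \<in> H"
    using contains_ordered_embedding[OF assms(1)] by blast
  have "{w. (v,w) \<in> E} \<subseteq> {1..n}"
    using assms(2) unfolding ordered_graph_def by auto
  then have "card (f ` {w. (v,w) \<in> E}) = right_deg E v"
    unfolding right_deg_def using inj by (metis card_image inj_on_subset)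
  then show ?thesis using edges by blast
qed

lemma finite_column:
  assumes "finite S"
  shows "finite {x. (x,w) \<in> S}"
  using finite_vimageI[OF assms, of "\<lambda>x. (x,w)"] by (simp add: vimage_def inj_on_def)

lemma mult_card_le_card_by_columns:
  fixes S :: "('a \<times> 'b) set"
  assumes "finite S" and column: "\<And>w. w \<in> W \<Longrightarrow> a \<le> card {x. (x,w) \<in> S}"
  shows "a * card W \<le> card S"
proof (cases "finite W")
  case False
  then show ?thesis by simp
next
  case True
  let ?col = "\<lambda>w. {x. (x,w) \<in> S}"
  have "a * card W = (\<Sum>w\<in>W. a)" by simp
  also have "\<dots> \<le> (\<Sum>w\<in>W. card (?col w))" using column by (rule sum_mono)
  also have "\<dots> = card (Sigma W ?col)" using True finite_column[OF assms(1)] by (simp add: card_SigmaI)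
  also have "\<dots> = card ((\<lambda>(w,x). (x,w)) ` Sigma W ?col)"
    by (rule card_image[symmetric]) (auto simp: inj_on_def)
  also have "\<dots> \<le> card S" by (rule card_mono[OF assms(1)]) auto
  finally show ?thesis .
qed

definition red_left :: "position \<Rightarrow> nat \<Rightarrow> nat set" where
  "red_left C w = {x. C (x,w) = Some Red}"

definition threshold_colour :: "nat \<Rightarrow> position \<Rightarrow> nat \<Rightarrow> colour" where
  "threshold_colour a C v = (if card (red_left C v) < a - 1 then Red else Blue)"

definition threshold_invariant :: "nat \<Rightarrow> position \<Rightarrow> bool" where
  "threshold_invariant a C \<longleftrightarrow> (\<forall>w. card (red_left C w) \<le> a - 1)
     \<and> (\<forall>u w. C (u,w) = Some Blue \<longrightarrow> a - 1 \<le> card (red_left C w))"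

lemma threshold_invariant_empty: "threshold_invariant a (\<lambda>_. None)"
  unfolding threshold_invariant_def red_left_def by simp

lemma red_left_update:
  "red_left (C((u,v) := Some c)) w =
     (if w = v \<and> c = Red then insert u (red_left C w)
      else if w = v then red_left C w - {u} else red_left C w)"
  unfolding red_left_def by auto

lemma threshold_invariant_step:
  assumes inv: "threshold_invariant a C" and free: "C (u,v) = None"
  shows "threshold_invariant a (C((u,v) := Some (threshold_colour a C v)))"
    (is "threshold_invariant a ?C")
proof (cases "card (red_left C v) < a - 1")
  case True
  then have red: "threshold_colour a C v = Red" by (simp add: threshold_colour_def)
  have "card (red_left ?C w) \<le> a - 1" for w
    using inv True card_insert_le_m1[of "a - 1" "red_left C v" u]
    by (auto simp: red red_left_update threshold_invariant_def)
  moreover have "a - 1 \<le> card (red_left ?C w)" if "?C (u',w) = Some Blue" for u' w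
  proof -
    have "a - 1 \<le> card (red_left C w)"
      using that inv red by (auto simp: threshold_invariant_def split: if_splits)
    then show ?thesis
      using card_insert_le[of "red_left C w" u] by (auto simp: red red_left_update)
  qed
  ultimately show ?thesis unfolding threshold_invariant_def by blast
next
  case False
  then have blue: "threshold_colour a C v = Blue" by (simp add: threshold_colour_def)
  have "red_left ?C w = red_left C w" for w
    using free by (auto simp: blue red_left_def)
  then show ?thesis
    using inv False by (auto simp: blue threshold_invariant_def)
qed

lemma threshold_invariant_no_red_copy:
  assumes "threshold_invariant a C" and "finite {e. C e \<noteq> None}" and "0 < a"
    and "ordered_graph n E" and "v \<in> {1..n}" and "left_deg E v = a"
  shows "\<not> contains_ordered n E {e. C e = Some Red}"
proof
  assume "contains_ordered n E {e. C e = Some Red}"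
  then obtain w U where "card U = a" and "U \<subseteq> red_left C w"
    using contains_ordered_left_star[OF _ assms(4), of _ v] assms(6)
    unfolding red_left_def by blast
  moreover have "finite (red_left C w)"
    using finite_column[OF assms(2), of w] unfolding red_left_def
    by (rule finite_subset[rotated]) auto
  ultimately have "a \<le> card (red_left C w)" by (metis card_mono)
  moreover have "card (red_left C w) \<le> a - 1"
    using assms(1) unfolding threshold_invariant_def by blast
  ultimately show False using assms(3) by linarith
qed

lemma threshold_invariant_blue_head:
  assumes "threshold_invariant a C" and "finite {e. C e \<noteq> None}" and "0 < a"
    and "C (u,w) = Some Blue"
  shows "a \<le> card {x. C (x,w) \<noteq> None}"
proof -
  have "u \<notin> red_left C w" using assms(4) by (simp add: red_left_def)
  moreover have "finite (red_left C w)"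
    using finite_column[OF assms(2), of w] unfolding red_left_def
    by (rule finite_subset[rotated]) auto
  ultimately have "card (insert u (red_left C w)) = Suc (card (red_left C w))" by simp
  moreover have "a - 1 \<le> card (red_left C w)"
    using assms(1,4) unfolding threshold_invariant_def by blast
  moreover have "card (insert u (red_left C w)) \<le> card {x. C (x,w) \<noteq> None}"
    using assms(4) finite_column[OF assms(2), of w] by (intro card_mono) (auto simp: red_left_def)
  ultimately show ?thesis using assms(3) by linarith
qed

lemma threshold_invariant_won_card:
  assumes "ordered_graph n1 E1" and "ordered_graph n2 E2"
    and inv: "threshold_invariant (max_left_deg n1 E1) C"
    and fin: "finite {e. C e \<noteq> None}" and won: "builder_won n1 E1 n2 E2 C"
  shows "max_left_deg n1 E1 * max_right_deg n2 E2 \<le> card {e. C e \<noteq> None}"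
proof (cases "max_left_deg n1 E1 = 0 \<or> max_right_deg n2 E2 = 0")
  case False
  then obtain v1 v2 where "v1 \<in> {1..n1}" "left_deg E1 v1 = max_left_deg n1 E1"
      and "right_deg E2 v2 = max_right_deg n2 E2"
    using Max_insert_0_image_attained[of "{1..n1}" "left_deg E1"]
      Max_insert_0_image_attained[of "{1..n2}" "right_deg E2"]
    unfolding max_left_deg_def max_right_deg_def by auto
  then have "\<not> contains_ordered n1 E1 {e. C e = Some Red}"
    using threshold_invariant_no_red_copy[OF inv fin] False assms(1) by blast
  then have "contains_ordered n2 E2 {e. C e = Some Blue}"
    using won unfolding builder_won_def by blast
  from contains_ordered_right_star[OF this assms(2), of v2]
  obtain u W where "card W = max_right_deg n2 E2"
      and blue: "\<forall>w\<in>W. C (u,w) = Some Blue"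
    using \<open>right_deg E2 v2 = max_right_deg n2 E2\<close> by auto
  moreover have "\<And>w. w \<in> W \<Longrightarrow> max_left_deg n1 E1 \<le> card {x. (x,w) \<in> {e. C e \<noteq> None}}"
    using threshold_invariant_blue_head[OF inv fin] False blue by auto
  ultimately show ?thesis using mult_card_le_card_by_columns[OF fin] by metis
qed auto

lemma min_mult_pred_le_mult:
  fixes a b :: nat
  shows "min (real a * (real a - 1)) (real b * (real b - 1)) \<le> real a * real b"
proof (cases "a \<le> b")
  case True
  then have "real a * (real a - 1) \<le> real a * real b" by (intro mult_left_mono) auto
  then show ?thesis by linarith
next
  case False
  then have "real b * (real b - 1) \<le> real a * real b"
    by (subst mult.commute) (intro mult_right_mono, auto)
  then show ?thesis by linarith
qed

theorem theorem3:
  fixes n1 n2 :: nat and E1 E2 :: "(nat \<times> nat) set"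
  assumes "ordered_graph n1 E1" and "ordered_graph n2 E2"
  shows "ereal ((1/4) * min (real (max_left_deg n1 E1) * (real (max_left_deg n1 E1) - 1))
                            (real (max_right_deg n2 E2) * (real (max_right_deg n2 E2) - 1)))
         \<le> online_ordered_ramsey n1 E1 n2 E2"
proof -
  let ?a = "max_left_deg n1 E1" and ?b = "max_right_deg n2 E2"
  have "(1/4) * min (real ?a * (real ?a - 1)) (real ?b * (real ?b - 1)) \<le> real (?a * ?b)"
  proof -
    have "0 \<le> real ?a * real ?b" by simp
    then show ?thesis using min_mult_pred_le_mult[of ?a ?b] by (simp only: of_nat_mult)
  qed
  also have "ereal (real (?a * ?b)) \<le> online_ordered_ramsey n1 E1 n2 E2"
    using threshold_invariant_step threshold_invariant_empty
      threshold_invariant_won_card[OF assms]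
    by (intro online_ordered_ramsey_ge_invariant[of "threshold_invariant ?a"]) blast+
  finally show ?thesis by simp
qed

end
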